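(* Let $p$ be a prime, $q=p^r$, $m,n\ge1$, and $0\le l\le r-1$. Let $\mathscr{C}\subseteq\mathrm{GF}(q^m)^n$ be a scalable code, $\mathscr{B}$ a basis of $\mathrm{GF}(q^m)$ over $\mathrm{GF}(q)$ and $\mathscr{B}'=\{\beta_1,\ldots,\beta_m\}$ its dual basis. Then $\mathrm{Im}_{\mathscr{B}}(\mathscr{C})$ is self-orthogonal w.r.t. the Hermitian-type product $\tilde h_l(x,y)=\sum_{i=1}^{mn}x_iy_i^{p^l}$ on $\mathrm{GF}(q)^{mn}$ if and only if $$\Big(\sum_{i=1}^n x_iy_i^{p^lq^k}\Big)\Big(\sum_{j=1}^m\beta_j^{1+p^lq^k}\Big)=0$$ for all $x=(x_1,\ldots,x_n),y=(y_1,\ldots,y_n)\in\mathscr{C}$ and all $0\le k\le m-1$.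
   Context: $\mathrm{Tr}:\mathrm{GF}(q^m)\to\mathrm{GF}(q)$, $\mathrm{Tr}(a)=\sum_{i=0}^{m-1}a^{q^i}$. The dual basis of a basis $\{\gamma_1,\ldots,\gamma_m\}$ is the unique basis $\{\beta_1,\ldots,\beta_m\}$ with $\mathrm{Tr}(\gamma_i\beta_j)=\delta_{ij}$. A code $\mathscr{C}\subseteq\mathrm{GF}(q^m)^n$ is scalable if $x\in\mathscr{C}\Rightarrow\alpha x\in\mathscr{C}$ for all $\alpha\in\mathrm{GF}(q^m)$. $\mathrm{Im}_{\mathscr{B}}(\mathscr{C})=\{(\mathrm{Tr}(\beta_1x_1),\ldots,\mathrm{Tr}(\beta_1x_n),\ldots,\mathrm{Tr}(\beta_mx_1),\ldots,\mathrm{Tr}(\beta_mx_n)):x\in\mathscr{C}\}\subseteq\mathrm{GF}(q)^{mn}$. A code $D$ is self-orthogonal w.r.t. a form $g$ if $g(x,y)=0$ for all $x,y\in D$. *)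

theory Defs
  imports Main "HOL-Computational_Algebra.Primes"
begin

text \<open>The field GF(q^m) is modelled as a finite field type 'a with CARD('a) = q^m;
  its subfield GF(q) is the set of fixed points of x \<mapsto> x^q.
  Vectors in GF(q^m)^n are lists of length n.\<close>

definition subGF :: "nat \<Rightarrow> 'a::{field,finite} set" where
  "subGF q = {x. x ^ q = x}"

definition tr :: "nat \<Rightarrow> nat \<Rightarrow> 'a::{field,finite} \<Rightarrow> 'a" where
  "tr q m a = (\<Sum>i<m. a ^ (q ^ i))"

definition is_basis :: "nat \<Rightarrow> nat \<Rightarrow> (nat \<Rightarrow> 'a::{field,finite}) \<Rightarrow> bool" where
  "is_basis q m \<gamma> \<longleftrightarrow>
     (\<forall>a::'a. \<exists>!c. (\<forall>i<m. c i \<in> subGF q) \<and> (\<forall>i\<ge>m. c i = 0) \<and> a = (\<Sum>i<m. c i * \<gamma> i))"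

definition is_dual_basis :: "nat \<Rightarrow> nat \<Rightarrow> (nat \<Rightarrow> 'a::{field,finite}) \<Rightarrow> (nat \<Rightarrow> 'a) \<Rightarrow> bool" where
  "is_dual_basis q m \<gamma> \<beta> \<longleftrightarrow> is_basis q m \<beta> \<and>
     (\<forall>i<m. \<forall>j<m. tr q m (\<gamma> i * \<beta> j) = (if i = j then 1 else 0))"

definition scalable :: "'a::field list set \<Rightarrow> bool" where
  "scalable C \<longleftrightarrow> (\<forall>x\<in>C. \<forall>\<alpha>. map (\<lambda>t. \<alpha> * t) x \<in> C)"

definition imB :: "nat \<Rightarrow> nat \<Rightarrow> (nat \<Rightarrow> 'a::{field,finite}) \<Rightarrow> 'a list set \<Rightarrow> 'a list set" where
  "imB q m \<beta> C = (\<lambda>x. concat (map (\<lambda>j. map (\<lambda>xi. tr q m (\<beta> j * xi)) x) [0..<m])) ` C"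

definition herm_l :: "nat \<Rightarrow> 'a::field list \<Rightarrow> 'a list \<Rightarrow> 'a" where
  "herm_l e x y = sum_list (map2 (\<lambda>a b. a * b ^ e) x y)"

definition self_orthogonal :: "('a list \<Rightarrow> 'a list \<Rightarrow> 'a::field) \<Rightarrow> 'a list set \<Rightarrow> bool" where
  "self_orthogonal g D \<longleftrightarrow> (\<forall>x\<in>D. \<forall>y\<in>D. g x y = 0)"

end

(* The coordinates Tr(beta_j x_i) lie in GF(q), so each term Tr(beta_j x_i) Tr(beta_j y_i)^(p^l) of
   h_l(Im x, Im y) equals Tr(Tr(beta_j y_i)^(p^l) beta_j x_i); expanding Tr(b)^(p^l) = sum_k b^(p^l q^k)
   with the Frobenius gives
     h_l(Im x, Im y) = Tr (sum_{k<m} (sum_i x_i y_i^(p^l q^k)) (sum_j beta_j^(1 + p^l q^k))).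
   Replacing x, y by alpha x, alpha' y (scalability) turns the right-hand side into Tr(alpha P(alpha')),
   where P has the m products in question as coefficients and the distinct exponents p^l q^k < q^m.
   Nondegeneracy of the trace form makes P vanish on all of GF(q^m), which forces its coefficients to
   vanish. The identity holds for arbitrary beta_j. *)

theory Submission
  imports Defs "HOL-Number_Theory.Residues" "HOL-Computational_Algebra.Polynomial"
begin

(* The library's finite_field_power_card_eq_same is stated for the class finite_field, which
   {field,finite} is not known to instantiate. *)
lemma finite_field_power_card:
  fixes x :: "'a::{field,finite}"
  shows "x ^ card (UNIV :: 'a set) = x"
proof (cases "x = 0")
  case True
  then show ?thesis
    using finite_UNIV_card_ge_0[where ?'a = 'a] by simp
next
  case False
  define G :: "'a monoid" where "G = \<lparr>carrier = UNIV - {0}, monoid.mult = (*), one = 1\<rparr>"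
  interpret group G
    by (rule groupI) (auto simp: G_def mult.assoc intro!: bexI[of _ "inverse _"])
  have pow: "x [^]\<^bsub>G\<^esub> k = x ^ k" for k :: nat
    by (induction k) (simp_all add: G_def mult.commute)
  have order: "Coset.order G = card (UNIV :: 'a set) - 1"
    by (simp add: Coset.order_def G_def card_Diff_singleton)
  have "x [^]\<^bsub>G\<^esub> Coset.order G = \<one>\<^bsub>G\<^esub>"
    using False by (intro pow_order_eq_1) (simp add: G_def)
  then have "x ^ (card (UNIV :: 'a set) - 1) = 1"
    by (simp only: pow order) (simp add: G_def)
  moreover have "card (UNIV :: 'a set) = Suc (card (UNIV :: 'a set) - 1)"
    using finite_UNIV_card_ge_0[where ?'a = 'a] by simp
  ultimately show ?thesis
    by (metis mult.right_neutral power_Suc)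
qed

lemma prime_CHAR_finite_field: "prime CHAR('a::{field,finite})"
  by (intro prime_CHAR_semidom finite_imp_CHAR_pos) simp

lemma two_le_card_finite_field: "2 \<le> card (UNIV :: 'a::{field,finite} set)"
proof -
  have "card {0, 1 :: 'a} \<le> card (UNIV :: 'a set)"
    by (rule card_mono) simp_all
  then show ?thesis
    by simp
qed

lemma CHAR_eq_if_card_eq_prime_power:
  assumes "prime p" and "card (UNIV :: 'a::{field,finite} set) = p ^ e"
  shows "CHAR('a) = p"
proof -
  have "CHAR('a) dvd p ^ e"
    using CHAR_dvd_CARD[where ?'a = 'a] assms(2) by simp
  then show ?thesis
    using assms(1) prime_CHAR_finite_field prime_dvd_power primes_dvd_imp_eq by blast
qed

lemma sum_monomials_eq_0_imp_coeffs_eq_0: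
  fixes c :: "'b \<Rightarrow> 'a::{field,finite}" and e :: "'b \<Rightarrow> nat"
  assumes "finite K" and "inj_on e K" and "\<forall>k\<in>K. e k < card (UNIV :: 'a set)"
    and "\<forall>x. (\<Sum>k\<in>K. c k * x ^ e k) = 0"
  shows "\<forall>k\<in>K. c k = 0"
proof -
  define P where "P = (\<Sum>k\<in>K. Polynomial.monom (c k) (e k))"
  have coeff_P: "coeff P (e k) = c k" if "k \<in> K" for k
  proof -
    have "coeff P (e k) = (\<Sum>j\<in>K. if j = k then c j else 0)"
      unfolding P_def coeff_sum coeff_monom
      by (rule sum.cong) (use assms(2) that in \<open>auto dest: inj_onD\<close>)
    then show ?thesis
      using assms(1) that by simp
  qed
  have "degree P < card (UNIV :: 'a set)"
  proof -
    have "degree P \<le> card (UNIV :: 'a set) - 1"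
    proof (rule degree_le, intro allI impI)
      fix i assume "card (UNIV :: 'a set) - 1 < i"
      then have "\<forall>k\<in>K. e k \<noteq> i"
        using assms(3) by fastforce
      then show "coeff P i = 0"
        by (simp add: P_def coeff_sum)
    qed
    then show ?thesis
      using finite_UNIV_card_ge_0[where ?'a = 'a] by simp
  qed
  moreover have "{x. poly P x = 0} = UNIV"
    using assms(4) by (simp add: P_def poly_sum poly_monom)
  ultimately have "P = 0"
    using card_poly_roots_bound[of P] by fastforce
  then show ?thesis
    using coeff_P by simp
qed

lemma herm_l_append:
  "length u = length w \<Longrightarrow> herm_l e (u @ u') (w @ w') = herm_l e u w + herm_l e u' w'"
  by (simp add: herm_l_def zip_append)

lemma herm_l_concat:
  assumes "\<forall>j\<in>set J. length (F j) = length (G j)"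
  shows "herm_l e (concat (map F J)) (concat (map G J)) = (\<Sum>j\<leftarrow>J. herm_l e (F j) (G j))"
  using assms
proof (induction J)
  case Nil
  then show ?case
    by (simp add: herm_l_def)
next
  case (Cons j J)
  then show ?case
    by (simp add: herm_l_append)
qed

lemma herm_l_eq_sum_nth:
  "length x = n \<Longrightarrow> length y = n \<Longrightarrow> herm_l e x y = (\<Sum>i<n. x ! i * y ! i ^ e)"
  by (simp add: herm_l_def sum_list_sum_nth atLeast0LessThan)

lemma herm_l_scale:
  fixes x y :: "'a::field list"
  shows "herm_l e (map ((*) \<alpha>) x) (map ((*) \<alpha>') y) = \<alpha> * \<alpha>' ^ e * herm_l e x y"
  by (induction x y rule: list_induct2')
    (simp_all add: herm_l_def power_mult_distrib algebra_simps)

definition tr_coords :: "nat \<Rightarrow> nat \<Rightarrow> (nat \<Rightarrow> 'a::{field,finite}) \<Rightarrow> 'a list \<Rightarrow> 'a list" where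
  "tr_coords q m \<beta> x = concat (map (\<lambda>j. map (\<lambda>xi. tr q m (\<beta> j * xi)) x) [0..<m])"

lemma imB_eq_image_tr_coords: "imB q m \<beta> C = tr_coords q m \<beta> ` C"
  unfolding imB_def tr_coords_def ..

lemma self_orthogonal_image_iff_scaled:
  assumes "scalable C"
  shows "self_orthogonal g (f ` C) \<longleftrightarrow>
    (\<forall>x\<in>C. \<forall>y\<in>C. \<forall>\<alpha> \<alpha>'. g (f (map ((*) \<alpha>) x)) (f (map ((*) \<alpha>') y)) = 0)"
proof
  assume "self_orthogonal g (f ` C)"
  then show "\<forall>x\<in>C. \<forall>y\<in>C. \<forall>\<alpha> \<alpha>'. g (f (map ((*) \<alpha>) x)) (f (map ((*) \<alpha>') y)) = 0"
    using assms by (simp add: self_orthogonal_def scalable_def)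
next
  assume "\<forall>x\<in>C. \<forall>y\<in>C. \<forall>\<alpha> \<alpha>'. g (f (map ((*) \<alpha>) x)) (f (map ((*) \<alpha>') y)) = 0"
  then have "\<forall>x\<in>C. \<forall>y\<in>C. g (f (map ((*) 1) x)) (f (map ((*) 1) y)) = 0"
    by blast
  moreover have "map ((*) 1) x = x" for x :: "'a list"
    by (rule map_idI) simp
  ultimately show "self_orthogonal g (f ` C)"
    by (simp add: self_orthogonal_def)
qed

context
  fixes p r q m :: nat
  assumes CHAR_eq: "CHAR('a::{field,finite}) = p"
    and q_eq: "q = p ^ r"
    and card_eq: "card (UNIV :: 'a set) = q ^ m"
begin

lemma prime_p: "prime p"
  using prime_CHAR_finite_field[where ?'a = 'a] by (simp add: CHAR_eq)

lemma sum_power_p_power: "sum (f :: 'b \<Rightarrow> 'a) A ^ (p ^ k) = (\<Sum>i\<in>A. f i ^ (p ^ k))"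
  by (rule freshmans_dream_sum') (simp_all add: prime_CHAR_finite_field flip: CHAR_eq)

lemma sum_power_q_power: "sum (f :: 'b \<Rightarrow> 'a) A ^ (q ^ k) = (\<Sum>i\<in>A. f i ^ (q ^ k))"
  using sum_power_p_power[of f A "r * k"] by (simp add: q_eq power_mult)

lemma power_q_power_m: "(x :: 'a) ^ (q ^ m) = x"
  using finite_field_power_card[of x] by (simp add: card_eq)

lemma q_ge_2: "q \<ge> 2" and m_pos: "m > 0"
proof -
  have le: "2 \<le> q ^ m"
    using two_le_card_finite_field[where ?'a = 'a] by (simp add: card_eq)
  show "q \<ge> 2"
  proof (rule ccontr)
    assume "\<not> q \<ge> 2"
    then have "q \<le> 1"
      by simp
    then have "q ^ m \<le> 1"
      using power_mono[of q 1 m] by simp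
    with le show False
      by simp
  qed
  show "m > 0"
    using le by (cases m) simp_all
qed

lemma p_power_q_power_less_card:
  assumes "l < r" and "k < m"
  shows "p ^ l * q ^ k < card (UNIV :: 'a set)"
proof -
  have "p ^ l < q"
    using assms(1) prime_ge_2_nat[OF prime_p] by (simp add: q_eq power_strict_increasing)
  then have "p ^ l * q ^ k < q ^ Suc k"
    using q_ge_2 by simp
  also have "\<dots> \<le> q ^ m"
    using assms(2) q_ge_2 by (intro power_increasing) simp_all
  finally show ?thesis
    by (simp add: card_eq)
qed

lemma inj_on_p_power_q_power: "inj_on (\<lambda>k. p ^ l * q ^ k) K"
  using q_ge_2 prime_gt_0_nat[OF prime_p] by (simp add: inj_on_def power_inject_exp)

lemma tr_sum: "tr q m (sum (f :: 'b \<Rightarrow> 'a) A) = (\<Sum>a\<in>A. tr q m (f a))"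
  unfolding tr_def sum_power_q_power by (rule sum.swap)

lemma tr_zero: "tr q m (0 :: 'a) = 0"
  using tr_sum[of "\<lambda>_. 0" "{}"] by simp

lemma subGF_power_q_power: "w \<in> subGF q \<Longrightarrow> (w :: 'a) ^ (q ^ i) = w"
proof (induction i)
  case (Suc i)
  then show ?case
    by (simp add: subGF_def power_mult mult.commute)
qed simp

lemma tr_mult_left_subGF: "w \<in> subGF q \<Longrightarrow> tr q m (w * (a :: 'a)) = w * tr q m a"
  unfolding tr_def by (simp add: power_mult_distrib subGF_power_q_power sum_distrib_left)

lemma tr_power_q: "tr q m (a :: 'a) ^ q = tr q m a"
proof -
  have "tr q m a ^ q = (\<Sum>i<m. (a ^ q ^ i) ^ q)"
    using sum_power_q_power[of "\<lambda>i. a ^ q ^ i" "{..<m}" 1] by (simp add: tr_def)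
  also have "\<dots> = (\<Sum>i<m. a ^ (q ^ Suc i))"
    by (simp only: power_Suc2 power_mult)
  also have "\<dots> = (\<Sum>i<Suc m. a ^ (q ^ i)) - a"
    by (simp only: sum.lessThan_Suc_shift) simp
  also have "\<dots> = tr q m a"
    by (simp add: tr_def power_q_power_m)
  finally show ?thesis .
qed

lemma tr_power_in_subGF: "tr q m (a :: 'a) ^ k \<in> subGF q"
proof -
  have "(tr q m a ^ k) ^ q = (tr q m a ^ q) ^ k"
    by (simp only: mult.commute flip: power_mult)
  then show ?thesis
    by (simp add: subGF_def tr_power_q)
qed

lemma tr_power_p_power: "tr q m (a :: 'a) ^ (p ^ l) = (\<Sum>k<m. a ^ (p ^ l * q ^ k))"
  unfolding tr_def sum_power_p_power by (simp add: mult.commute flip: power_mult)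

lemma tr_not_identically_zero: "\<exists>a :: 'a. tr q m a \<noteq> 0"
proof (rule ccontr)
  assume "\<not> ?thesis"
  then have "\<forall>x :: 'a. (\<Sum>k<m. 1 * x ^ (q ^ k)) = 0"
    by (simp add: tr_def)
  moreover have "inj_on (\<lambda>k. q ^ k) {..<m}"
    using q_ge_2 by (simp add: inj_on_def power_inject_exp)
  moreover have "\<forall>k\<in>{..<m}. q ^ k < card (UNIV :: 'a set)"
    using q_ge_2 by (auto simp: card_eq intro: power_strict_increasing)
  ultimately have "\<forall>k\<in>{..<m}. (1 :: 'a) = 0"
    by (intro sum_monomials_eq_0_imp_coeffs_eq_0) simp_all
  then show False
    using m_pos by auto
qed

lemma tr_nondegenerate:
  assumes "\<And>\<alpha>. tr q m (\<alpha> * c) = 0"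
  shows "(c :: 'a) = 0"
proof (rule ccontr)
  assume "c \<noteq> 0"
  obtain a :: 'a where "tr q m a \<noteq> 0"
    using tr_not_identically_zero by blast
  moreover have "tr q m (a / c * c) = 0"
    by (rule assms)
  ultimately show False
    using \<open>c \<noteq> 0\<close> by simp
qed

lemma tr_mult_sum_monomials_eq_0_iff:
  fixes c :: "'b \<Rightarrow> 'a" and e :: "'b \<Rightarrow> nat"
  assumes "finite K" and "inj_on e K" and "\<forall>k\<in>K. e k < card (UNIV :: 'a set)"
  shows "(\<forall>\<alpha> \<beta>. tr q m (\<alpha> * (\<Sum>k\<in>K. c k * \<beta> ^ e k)) = 0) \<longleftrightarrow> (\<forall>k\<in>K. c k = 0)"
proof
  assume "\<forall>\<alpha> \<beta>. tr q m (\<alpha> * (\<Sum>k\<in>K. c k * \<beta> ^ e k)) = 0"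
  then have "\<forall>\<beta>. (\<Sum>k\<in>K. c k * \<beta> ^ e k) = 0"
    using tr_nondegenerate by blast
  then show "\<forall>k\<in>K. c k = 0"
    by (rule sum_monomials_eq_0_imp_coeffs_eq_0[OF assms])
qed (simp add: tr_zero)

lemma herm_l_tr_coords:
  fixes x y :: "'a list" and \<beta> :: "nat \<Rightarrow> 'a"
  assumes "length x = length y"
  shows "herm_l (p ^ l) (tr_coords q m \<beta> x) (tr_coords q m \<beta> y) =
    tr q m (\<Sum>k<m. herm_l (p ^ l * q ^ k) x y * (\<Sum>j<m. \<beta> j ^ (1 + p ^ l * q ^ k)))"
proof -
  let ?n = "length x" and ?e = "\<lambda>k. p ^ l * q ^ k"
  have "herm_l (p ^ l) (tr_coords q m \<beta> x) (tr_coords q m \<beta> y)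
      = (\<Sum>j<m. \<Sum>i<?n. tr q m (\<beta> j * x ! i) * tr q m (\<beta> j * y ! i) ^ p ^ l)"
    using assms
    by (simp add: tr_coords_def herm_l_concat herm_l_eq_sum_nth interv_sum_list_conv_sum_set_nat
        atLeast0LessThan)
  also have "\<dots> = (\<Sum>j<m. \<Sum>i<?n. tr q m (tr q m (\<beta> j * y ! i) ^ p ^ l * (\<beta> j * x ! i)))"
    by (intro sum.cong refl, subst tr_mult_left_subGF[OF tr_power_in_subGF]) (simp add: mult.commute)
  also have "\<dots> = tr q m (\<Sum>j<m. \<Sum>i<?n. tr q m (\<beta> j * y ! i) ^ p ^ l * (\<beta> j * x ! i))"
    by (simp add: tr_sum)
  also have "(\<Sum>j<m. \<Sum>i<?n. tr q m (\<beta> j * y ! i) ^ p ^ l * (\<beta> j * x ! i))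
      = (\<Sum>j<m. \<Sum>i<?n. \<Sum>k<m. x ! i * y ! i ^ ?e k * \<beta> j ^ (1 + ?e k))"
    by (simp add: tr_power_p_power sum_distrib_left power_mult_distrib power_add mult_ac)
  also have "\<dots> = (\<Sum>k<m. \<Sum>i<?n. \<Sum>j<m. x ! i * y ! i ^ ?e k * \<beta> j ^ (1 + ?e k))"
    by (subst sum.swap, subst (1 2) sum.swap) (rule refl)
  also have "\<dots> = (\<Sum>k<m. herm_l (?e k) x y * (\<Sum>j<m. \<beta> j ^ (1 + ?e k)))"
    using assms by (simp add: herm_l_eq_sum_nth sum_product)
  finally show ?thesis .
qed

lemma self_orthogonal_tr_coords_iff:
  fixes C :: "'a list set" and \<beta> :: "nat \<Rightarrow> 'a"
  assumes "scalable C" and "C \<subseteq> {x. length x = n}" and "l < r"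
  shows "self_orthogonal (herm_l (p ^ l)) (tr_coords q m \<beta> ` C) \<longleftrightarrow>
    (\<forall>x\<in>C. \<forall>y\<in>C. \<forall>k<m. herm_l (p ^ l * q ^ k) x y * (\<Sum>j<m. \<beta> j ^ (1 + p ^ l * q ^ k)) = 0)"
proof -
  have length_C: "length x = n" if "x \<in> C" for x
    using assms(2) that by auto
  define c where "c x y k = herm_l (p ^ l * q ^ k) x y * (\<Sum>j<m. \<beta> j ^ (1 + p ^ l * q ^ k))" for x y k
  have scaled: "herm_l (p ^ l) (tr_coords q m \<beta> (map ((*) \<alpha>) x)) (tr_coords q m \<beta> (map ((*) \<alpha>') y))
      = tr q m (\<alpha> * (\<Sum>k<m. c x y k * \<alpha>' ^ (p ^ l * q ^ k)))" if "length x = length y" for x y \<alpha> \<alpha>'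
  proof -
    have "herm_l (p ^ l) (tr_coords q m \<beta> (map ((*) \<alpha>) x)) (tr_coords q m \<beta> (map ((*) \<alpha>') y))
        = tr q m (\<Sum>k<m. herm_l (p ^ l * q ^ k) (map ((*) \<alpha>) x) (map ((*) \<alpha>') y)
            * (\<Sum>j<m. \<beta> j ^ (1 + p ^ l * q ^ k)))"
      by (rule herm_l_tr_coords) (simp add: that)
    also have "\<dots> = tr q m (\<Sum>k<m. \<alpha> * (c x y k * \<alpha>' ^ (p ^ l * q ^ k)))"
      by (simp only: herm_l_scale c_def mult_ac)
    also have "\<dots> = tr q m (\<alpha> * (\<Sum>k<m. c x y k * \<alpha>' ^ (p ^ l * q ^ k)))"
      by (simp only: sum_distrib_left)
    finally show ?thesis .
  qed
  have "self_orthogonal (herm_l (p ^ l)) (tr_coords q m \<beta> ` C) \<longleftrightarrow>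
      (\<forall>x\<in>C. \<forall>y\<in>C. \<forall>\<alpha> \<alpha>'. tr q m (\<alpha> * (\<Sum>k<m. c x y k * \<alpha>' ^ (p ^ l * q ^ k))) = 0)"
    using assms(1) by (simp add: self_orthogonal_image_iff_scaled scaled length_C)
  also have "\<dots> \<longleftrightarrow> (\<forall>x\<in>C. \<forall>y\<in>C. \<forall>k\<in>{..<m}. c x y k = 0)"
    using assms(3)
    by (simp add: tr_mult_sum_monomials_eq_0_iff inj_on_p_power_q_power p_power_q_power_less_card)
  finally show ?thesis
    by (simp add: c_def Ball_def)
qed

end

theorem theorem6:
  fixes p r m n l q :: nat
    and C :: "('a::{field,finite}) list set"
    and \<gamma> \<beta> :: "nat \<Rightarrow> 'a"
  assumes "prime p" and "q = p ^ r" and "m \<ge> 1" and "n \<ge> 1" and "l \<le> r - 1" and "r \<ge> 1"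
    and "card (UNIV :: 'a set) = q ^ m"
    and "C \<subseteq> {x. length x = n}"
    and "scalable C"
    and "is_basis q m \<gamma>"
    and "is_dual_basis q m \<gamma> \<beta>"
  shows "self_orthogonal (herm_l (p ^ l)) (imB q m \<beta> C) \<longleftrightarrow>
    (\<forall>x\<in>C. \<forall>y\<in>C. \<forall>k<m.
       (\<Sum>i<n. x ! i * (y ! i) ^ (p ^ l * q ^ k)) * (\<Sum>j<m. \<beta> j ^ (1 + p ^ l * q ^ k)) = 0)"
proof -
  have CHAR: "CHAR('a) = p"
    using CHAR_eq_if_card_eq_prime_power[of p "r * m"] assms(1,2,7) by (simp add: power_mult)
  have "l < r"
    using assms(5,6) by simp
  have length_C: "length x = n" if "x \<in> C" for x
    using assms(8) that by auto
  have "self_orthogonal (herm_l (p ^ l)) (imB q m \<beta> C) \<longleftrightarrow>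
      (\<forall>x\<in>C. \<forall>y\<in>C. \<forall>k<m. herm_l (p ^ l * q ^ k) x y * (\<Sum>j<m. \<beta> j ^ (1 + p ^ l * q ^ k)) = 0)"
    unfolding imB_eq_image_tr_coords
    by (rule self_orthogonal_tr_coords_iff[OF CHAR assms(2,7,9,8) \<open>l < r\<close>])
  then show ?thesis
    by (simp add: herm_l_eq_sum_nth length_C)
qed

end
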